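(* Let $\omega\in\Omega_+$, $-\infty\le x\le y_1\le y_2\le z\le\infty$ with $y_1,y_2\in\mathbb Z$, and $t\in[0,\infty]$. Then \[P_{y_1,\omega}[T_z\le T_x\wedge t]\le P_{y_2,\omega}[T_z\le T_x\wedge t].\]
   Context: Cookie environments: $\Omega_+=([1/2,1]^{\mathbb N})^{\mathbb Z}$. $P_{x,\omega}$ is the law of the nearest-neighbor process $(X_n)_{n\ge0}$ with $X_0=x$ which, on its $i$-th visit to site $z$, jumps to $z+1$ with probability $\omega(z,i)$ and to $z-1$ otherwise. $T_k=\inf\{n\ge0:X_n=k\}$ for $k\in\mathbb Z$, and $T_\infty=T_{-\infty}=\infty$. *)

theory Defs
  imports "HOL-Probability.Probability"
begin

text \<open>Cookie environments: omega z i is the probability to jump right on the i-th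
  visit (i = 1, 2, ...) to site z. The value at i = 0 is irrelevant.\<close>
definition Omega_plus :: "(int \<Rightarrow> nat \<Rightarrow> real) set" where
  "Omega_plus = {\<omega>. \<forall>z i. i \<ge> 1 \<longrightarrow> 1/2 \<le> \<omega> z i \<and> \<omega> z i \<le> 1}"

definition cookie_space :: "(nat \<Rightarrow> real) measure" where
  "cookie_space = PiM UNIV (\<lambda>_::nat. uniform_measure lborel {0..1::real})"

text \<open>History X_0, ..., X_n of the walk started at x driven by u: at time n the walk
  is at p, which it visits for the i-th time (i = number of occurrences of p in the
  history so far); it jumps to p+1 iff u n < omega p i.\<close>
fun cookie_hist :: "int \<Rightarrow> (int \<Rightarrow> nat \<Rightarrow> real) \<Rightarrow> (nat \<Rightarrow> real) \<Rightarrow> nat \<Rightarrow> int list" where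
  "cookie_hist x \<omega> u 0 = [x]"
| "cookie_hist x \<omega> u (Suc n) =
     (let xs = cookie_hist x \<omega> u n; p = last xs; i = count_list xs p
      in xs @ [if u n < \<omega> p i then p + 1 else p - 1])"

definition cookie_walk :: "int \<Rightarrow> (int \<Rightarrow> nat \<Rightarrow> real) \<Rightarrow> (nat \<Rightarrow> real) \<Rightarrow> nat \<Rightarrow> int" where
  "cookie_walk x \<omega> u n = last (cookie_hist x \<omega> u n)"

definition cookie_prob :: "int \<Rightarrow> (int \<Rightarrow> nat \<Rightarrow> real) \<Rightarrow> ((nat \<Rightarrow> int) \<Rightarrow> bool) \<Rightarrow> real" where
  "cookie_prob x \<omega> A = measure cookie_space {u \<in> space cookie_space. A (cookie_walk x \<omega> u)}"

text \<open>Hitting time T_k = inf{n. X_n = k} (infinity if never, in particular for k = +-infinity).\<close>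
definition hit :: "(nat \<Rightarrow> int) \<Rightarrow> ereal \<Rightarrow> ereal" where
  "hit X k = (if \<exists>n. ereal (of_int (X n)) = k
              then ereal (real (LEAST n. ereal (of_int (X n)) = k)) else \<infinity>)"

end

theory Submission
  imports Defs
begin

(* Fix targets b <= y < y + 1 <= a and let h(y) be the probability that the walk started at y
   reaches a within n steps without visiting b before. Let L(K) be the expectation of K, evaluated
   in the leftover environment, on reaching y + 1 from y before b, so that h(y) = L(h(y + 1));
   and h(y + 1) is the expectation, on leaving y + 1, of h(y) if y is reached before a and of 1
   otherwise. The first phase only moves at sites <= y, the second only at sites >= y + 1, so they
   eat disjoint cookies and can be swapped. After the swap, h(y) is the expression for h(y + 1)
   with h(y) replaced by L(h(y)) <= L(h(y + 1)) = h(y) (induction on n) and 1 replaced by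
   L(1) <= 1; hence h(y) <= h(y + 1). Reflecting the line gives the reverse monotonicity for the
   left target, which handles t = oo: there the event is the complement of hitting x before z,
   an increasing limit of finite-horizon events. *)

section \<open>Cookie environments and walks stopped on entering a set\<close>

type_synonym env = "int \<Rightarrow> nat \<Rightarrow> real"

definition consume_cookie :: "int \<Rightarrow> env \<Rightarrow> env" where
  "consume_cookie p \<omega> = (\<lambda>z i. if z = p then \<omega> z (Suc i) else \<omega> z i)"

definition cookie_env :: "env \<Rightarrow> bool" where
  "cookie_env \<omega> \<longleftrightarrow> (\<forall>z i. 1 \<le> i \<longrightarrow> 0 \<le> \<omega> z i \<and> \<omega> z i \<le> 1)"

lemma Omega_plus_imp_cookie_env: "\<omega> \<in> Omega_plus \<Longrightarrow> cookie_env \<omega>"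
  unfolding Omega_plus_def cookie_env_def by (fastforce intro: order_trans[of 0 "1/2"])

lemma cookie_env_consume_cookie: "cookie_env \<omega> \<Longrightarrow> cookie_env (consume_cookie p \<omega>)"
  by (auto simp: cookie_env_def consume_cookie_def)

lemma cookie_env_first_cookie: "cookie_env \<omega> \<Longrightarrow> 0 \<le> \<omega> z 1 \<and> \<omega> z 1 \<le> 1"
  by (auto simp: cookie_env_def)

lemma consume_cookie_commute: "consume_cookie p (consume_cookie q \<omega>) = consume_cookie q (consume_cookie p \<omega>)"
  by (auto simp: consume_cookie_def fun_eq_iff)

lemma consume_cookie_other: "p \<noteq> q \<Longrightarrow> consume_cookie p \<omega> q i = \<omega> q i"
  by (simp add: consume_cookie_def)

lemma convex_comb_mono:
  fixes \<alpha> A B A' B' :: real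
  assumes "0 \<le> \<alpha>" "\<alpha> \<le> 1" "A \<le> A'" "B \<le> B'"
  shows "\<alpha> * A + (1 - \<alpha>) * B \<le> \<alpha> * A' + (1 - \<alpha>) * B'"
  using assms by (intro add_mono mult_left_mono) auto

text \<open>\<open>run_until S K p \<omega> n\<close> is \<open>E\<^sub>p\<^sub>,\<^sub>\<omega>[K(X\<^sub>\<tau>, \<omega>\<^sub>\<tau>, n - \<tau>); \<tau> \<le> n]\<close>, where \<open>\<tau>\<close> is the
  first time the walk is in \<open>S\<close> and \<open>\<omega>\<^sub>\<tau>\<close> is the environment left over at that time.\<close>
fun run_until :: "(int \<Rightarrow> bool) \<Rightarrow> (int \<Rightarrow> env \<Rightarrow> nat \<Rightarrow> real) \<Rightarrow> int \<Rightarrow> env \<Rightarrow> nat \<Rightarrow> real" where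
  "run_until S K p \<omega> 0 = (if S p then K p \<omega> 0 else 0)"
| "run_until S K p \<omega> (Suc n) = (if S p then K p \<omega> (Suc n) else
     \<omega> p 1 * run_until S K (p + 1) (consume_cookie p \<omega>) n
     + (1 - \<omega> p 1) * run_until S K (p - 1) (consume_cookie p \<omega>) n)"

lemma run_until_stop [simp]: "S p \<Longrightarrow> run_until S K p \<omega> n = K p \<omega> n"
  by (cases n) auto

lemma run_until_zero [simp]: "run_until S (\<lambda>_ _ _. 0) p \<omega> n = 0"
  by (induction n arbitrary: p \<omega>) auto

lemma run_until_le_one:
  assumes "cookie_env \<omega>" and "\<And>q \<omega>' m. K q \<omega>' m \<le> 1"
  shows "run_until S K p \<omega> n \<le> 1"
  using assms(1)
proof (induction n arbitrary: p \<omega>)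
  case (Suc n)
  then have "run_until S K (p + 1) (consume_cookie p \<omega>) n \<le> 1"
    and "run_until S K (p - 1) (consume_cookie p \<omega>) n \<le> 1"
    by (simp_all add: cookie_env_consume_cookie)
  then show ?case
    using assms(2) cookie_env_first_cookie[OF Suc.prems] by (auto intro: convex_bound_le)
qed (simp add: assms(2))

lemma run_until_mono:
  assumes "cookie_env \<omega>"
    and "\<And>q \<omega>' m. cookie_env \<omega>' \<Longrightarrow> m \<le> n \<Longrightarrow> m < n \<or> q = p \<Longrightarrow> K q \<omega>' m \<le> K' q \<omega>' m"
  shows "run_until S K p \<omega> n \<le> run_until S K' p \<omega> n"
  using assms
proof (induction n arbitrary: p \<omega>)
  case (Suc n)
  have "run_until S K p' (consume_cookie p \<omega>) n \<le> run_until S K' p' (consume_cookie p \<omega>) n" for p'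
    using Suc by (intro Suc.IH) (auto simp: cookie_env_consume_cookie)
  then show ?case
    using Suc.prems cookie_env_first_cookie[OF Suc.prems(1)] by (simp add: convex_comb_mono)
qed simp

lemma run_until_cong:
  assumes "R p" and "\<And>q. R q \<Longrightarrow> \<not> S q \<Longrightarrow> R (q + 1) \<and> R (q - 1)"
    and "\<And>q \<omega> m. R q \<Longrightarrow> S q \<Longrightarrow> K q \<omega> m = K' q \<omega> m"
  shows "run_until S K p \<omega> n = run_until S K' p \<omega> n"
  using assms(1) by (induction n arbitrary: p \<omega>) (simp_all add: assms(2,3))

lemma run_until_restart:
  assumes "\<And>q. T q \<Longrightarrow> S q"
  shows "run_until T K p \<omega> n = run_until S (run_until T K) p \<omega> n"
  by (induction n arbitrary: p \<omega>) (auto dest: assms)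

text \<open>Since every site lies in \<open>S\<close> or in \<open>S'\<close>, the two walks never move from the same
  site, so they eat disjoint sets of cookies and can be run in either order.\<close>
lemma run_until_commute:
  fixes K :: "int \<Rightarrow> int \<Rightarrow> env \<Rightarrow> nat \<Rightarrow> real"
  assumes disjoint: "\<And>r. S r \<or> S' r"
  shows "run_until S (\<lambda>p' \<omega>' m. run_until S' (K p') q \<omega>' m) p \<omega> n
       = run_until S' (\<lambda>q' \<omega>' m. run_until S (\<lambda>p'. K p' q') p \<omega>' m) q \<omega> n"
    (is "?L p q \<omega> n = ?R p q \<omega> n")
proof (induction n arbitrary: p q \<omega> rule: less_induct)
  case (less n)
  consider "S p" | "S' q" | "\<not> S p" "\<not> S' q" "n = 0" | (move) m where "\<not> S p" "\<not> S' q" "n = Suc m"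
    by (cases n) auto
  then show ?case
  proof cases
    case (move m)
    have "p \<noteq> q"
      using move disjoint by metis
    define \<alpha> \<beta> where "\<alpha> = \<omega> p 1" and "\<beta> = \<omega> q 1"
    define \<omega>\<^sub>p \<omega>\<^sub>q \<omega>\<^sub>p\<^sub>q where "\<omega>\<^sub>p = consume_cookie p \<omega>" and "\<omega>\<^sub>q = consume_cookie q \<omega>"
      and "\<omega>\<^sub>p\<^sub>q = consume_cookie p \<omega>\<^sub>q"
    have \<alpha>: "\<omega>\<^sub>q p 1 = \<alpha>" and \<beta>: "\<omega>\<^sub>p q 1 = \<beta>" and \<omega>\<^sub>p\<^sub>q: "consume_cookie q \<omega>\<^sub>p = \<omega>\<^sub>p\<^sub>q"
      using \<open>p \<noteq> q\<close> by (simp_all add: \<alpha>_def \<beta>_def \<omega>\<^sub>p_def \<omega>\<^sub>q_def \<omega>\<^sub>p\<^sub>q_def consume_cookie_other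
          consume_cookie_commute)
    have L: "?L p q \<omega> n = \<alpha> * ?R (p + 1) q \<omega>\<^sub>p m + (1 - \<alpha>) * ?R (p - 1) q \<omega>\<^sub>p m"
      using move less.IH[of m] by (simp add: \<alpha>_def \<omega>\<^sub>p_def)
    have R: "?R p q \<omega> n = \<beta> * ?L p (q + 1) \<omega>\<^sub>q m + (1 - \<beta>) * ?L p (q - 1) \<omega>\<^sub>q m"
      using move less.IH[of m] by (simp add: \<beta>_def \<omega>\<^sub>q_def)
    show ?thesis
    proof (cases m)
      case 0
      then show ?thesis
        using move L R by simp
    next
      case (Suc k)
      have R_step: "?R p' q \<omega>\<^sub>p m = \<beta> * ?R p' (q + 1) \<omega>\<^sub>p\<^sub>q k + (1 - \<beta>) * ?R p' (q - 1) \<omega>\<^sub>p\<^sub>q k" for p'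
        using move Suc \<beta> \<omega>\<^sub>p\<^sub>q by simp
      have L_step: "?L p q' \<omega>\<^sub>q m = \<alpha> * ?R (p + 1) q' \<omega>\<^sub>p\<^sub>q k + (1 - \<alpha>) * ?R (p - 1) q' \<omega>\<^sub>p\<^sub>q k" for q'
        using move Suc \<alpha> less.IH[of k] by (simp add: \<omega>\<^sub>p\<^sub>q_def)
      show ?thesis
        unfolding L R R_step L_step by (simp add: algebra_simps)
    qed
  qed simp_all
qed

section \<open>Monotonicity of hitting probabilities in the starting point\<close>

definition hit_prob :: "ereal \<Rightarrow> ereal \<Rightarrow> int \<Rightarrow> env \<Rightarrow> nat \<Rightarrow> real" where
  "hit_prob a b = run_until (\<lambda>q. ereal (of_int q) = a \<or> ereal (of_int q) = b)
     (\<lambda>q _ _. if ereal (of_int q) = a then 1 else 0)"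

lemma hit_prob_0: "hit_prob a b p \<omega> 0 = (if ereal (of_int p) = a then 1 else 0)"
  by (simp add: hit_prob_def)

lemma hit_prob_Suc:
  "hit_prob a b p \<omega> (Suc n) = (if ereal (of_int p) = a then 1 else if ereal (of_int p) = b then 0 else
     \<omega> p 1 * hit_prob a b (p + 1) (consume_cookie p \<omega>) n
     + (1 - \<omega> p 1) * hit_prob a b (p - 1) (consume_cookie p \<omega>) n)"
  by (simp add: hit_prob_def)

lemma hit_prob_from_below:
  assumes "ereal (of_int (y + 1)) \<le> a" and "p \<le> y + 1"
  shows "hit_prob a b p \<omega> n = run_until (\<lambda>q. y + 1 \<le> q \<or> ereal (of_int q) = b)
           (\<lambda>q. if q = y + 1 then hit_prob a b (y + 1) else (\<lambda>_ _. 0)) p \<omega> n"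
proof -
  have a: "ereal (of_int q) \<noteq> a" if "q \<le> y" for q
    using assms(1) that by auto
  have "hit_prob a b p \<omega> n = run_until (\<lambda>q. y + 1 \<le> q \<or> ereal (of_int q) = b) (hit_prob a b) p \<omega> n"
    unfolding hit_prob_def by (rule run_until_restart) (smt (verit) a)
  also have "\<dots> = run_until (\<lambda>q. y + 1 \<le> q \<or> ereal (of_int q) = b)
           (\<lambda>q. if q = y + 1 then hit_prob a b (y + 1) else (\<lambda>_ _. 0)) p \<omega> n"
    by (rule run_until_cong[where R = "\<lambda>q. q \<le> y + 1"]) (auto simp: assms(2) hit_prob_def a)
  finally show ?thesis .
qed

lemma hit_prob_from_above:
  assumes "b \<le> ereal (of_int y)" and "y \<le> p"
  shows "hit_prob a b p \<omega> n = run_until (\<lambda>q. q \<le> y \<or> ereal (of_int q) = a)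
           (\<lambda>q. if q = y then hit_prob a b y else (\<lambda>_ _. 1)) p \<omega> n"
proof -
  have b: "ereal (of_int q) \<noteq> b" if "y + 1 \<le> q" for q
    using assms(1) that by auto
  have "hit_prob a b p \<omega> n = run_until (\<lambda>q. q \<le> y \<or> ereal (of_int q) = a) (hit_prob a b) p \<omega> n"
    unfolding hit_prob_def by (rule run_until_restart) (smt (verit) b)
  also have "\<dots> = run_until (\<lambda>q. q \<le> y \<or> ereal (of_int q) = a)
           (\<lambda>q. if q = y then hit_prob a b y else (\<lambda>_ _. 1)) p \<omega> n"
    by (rule run_until_cong[where R = "\<lambda>q. y \<le> q"]) (auto simp: assms(2) hit_prob_def)
  finally show ?thesis .
qed

lemma hit_prob_step_up:
  assumes "b \<le> ereal (of_int y)" and "ereal (of_int (y + 1)) \<le> a" and "cookie_env \<omega>"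
  shows "hit_prob a b y \<omega> n \<le> hit_prob a b (y + 1) \<omega> n"
  using assms(3)
proof (induction n arbitrary: \<omega> rule: less_induct)
  case (less n)
  define lo where "lo = (\<lambda>q. y + 1 \<le> q \<or> ereal (of_int q) = b)"
  define hi where "hi = (\<lambda>q. q \<le> y \<or> ereal (of_int q) = a)"
  define L where "L K = run_until lo (\<lambda>p. if p = y + 1 then K else (\<lambda>_ _. 0)) y" for K
  define H where "H = (\<lambda>q. if q = y then hit_prob a b y else (\<lambda>_ _. 1))"
  have below: "hit_prob a b y = L (hit_prob a b (y + 1))"
    using hit_prob_from_below[OF assms(2)] by (simp add: L_def lo_def fun_eq_iff)
  have above: "hit_prob a b (y + 1) = run_until hi H (y + 1)"
    using hit_prob_from_above[OF assms(1)] by (simp add: H_def hi_def fun_eq_iff)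
  have "(\<lambda>p. if p = y + 1 then run_until hi H (y + 1) else (\<lambda>_ _. 0))
      = (\<lambda>p. run_until hi (\<lambda>q. if p = y + 1 then H q else (\<lambda>_ _. 0)) (y + 1))"
    by (simp add: fun_eq_iff)
  then have "hit_prob a b y \<omega> n
      = run_until lo (\<lambda>p. run_until hi (\<lambda>q. if p = y + 1 then H q else (\<lambda>_ _. 0)) (y + 1)) y \<omega> n"
    by (simp add: below above L_def)
  also have "\<dots> = run_until hi (\<lambda>q. L (H q)) (y + 1) \<omega> n"
    unfolding L_def by (rule run_until_commute) (auto simp: lo_def hi_def)
  also have "\<dots> \<le> run_until hi H (y + 1) \<omega> n"
  proof (rule run_until_mono[OF less.prems])
    fix q \<omega>' m assume env: "cookie_env \<omega>'" and "m \<le> n" and "m < n \<or> q = y + 1"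
    show "L (H q) \<omega>' m \<le> H q \<omega>' m"
    proof (cases "q = y")
      case True
      with \<open>m < n \<or> q = y + 1\<close> have "m < n" by simp
      then have "L (hit_prob a b y) \<omega>' m \<le> L (hit_prob a b (y + 1)) \<omega>' m"
        unfolding L_def by (intro run_until_mono[OF env]) (auto intro: less.IH)
      then show ?thesis
        using True by (simp add: H_def flip: below)
    next
      case False
      then show ?thesis
        unfolding L_def H_def by (simp add: run_until_le_one[OF env])
    qed
  qed
  also have "\<dots> = hit_prob a b (y + 1) \<omega> n"
    by (simp add: above)
  finally show ?case .
qed

definition reflect_env :: "env \<Rightarrow> env" where
  "reflect_env \<omega> = (\<lambda>z i. 1 - \<omega> (- z) i)"

lemma cookie_env_reflect_env: "cookie_env \<omega> \<Longrightarrow> cookie_env (reflect_env \<omega>)"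
  by (auto simp: cookie_env_def reflect_env_def)

lemma consume_cookie_reflect_env: "consume_cookie (- p) (reflect_env \<omega>) = reflect_env (consume_cookie p \<omega>)"
  by (auto simp: consume_cookie_def reflect_env_def fun_eq_iff)

lemma ereal_of_int_uminus_eq_iff: "ereal (of_int (- p)) = - a \<longleftrightarrow> ereal (of_int p) = a"
  by (cases a) auto

lemma hit_prob_reflect: "hit_prob a b p \<omega> n = hit_prob (- a) (- b) (- p) (reflect_env \<omega>) n"
proof (induction n arbitrary: p \<omega>)
  case (Suc n)
  have right: "hit_prob a b (p + 1) (consume_cookie p \<omega>) n
      = hit_prob (- a) (- b) (- p - 1) (consume_cookie (- p) (reflect_env \<omega>)) n"
    using Suc.IH[of "p + 1"] by (simp add: consume_cookie_reflect_env)
  have left: "hit_prob a b (p - 1) (consume_cookie p \<omega>) n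
      = hit_prob (- a) (- b) (- p + 1) (consume_cookie (- p) (reflect_env \<omega>)) n"
    using Suc.IH[of "p - 1"] by (simp add: consume_cookie_reflect_env)
  have flipped: "reflect_env \<omega> (- p) 1 = 1 - \<omega> p 1"
    by (simp add: reflect_env_def)
  show ?case
    unfolding hit_prob_Suc ereal_of_int_uminus_eq_iff left right flipped by (simp add: algebra_simps)
qed (simp only: hit_prob_0 ereal_of_int_uminus_eq_iff)

lemma hit_prob_step_down:
  assumes "a \<le> ereal (of_int y)" and "ereal (of_int (y + 1)) \<le> b" and "cookie_env \<omega>"
  shows "hit_prob a b (y + 1) \<omega> n \<le> hit_prob a b y \<omega> n"
proof -
  have "- b \<le> ereal (of_int (- (y + 1)))"
    using assms(2) by (metis ereal_minus_le_minus of_int_minus uminus_ereal.simps(1))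
  moreover have "ereal (of_int (- (y + 1) + 1)) \<le> - a"
    using assms(1) by (simp flip: uminus_ereal.simps)
  ultimately have "hit_prob (- a) (- b) (- (y + 1)) (reflect_env \<omega>) n
      \<le> hit_prob (- a) (- b) (- (y + 1) + 1) (reflect_env \<omega>) n"
    using assms(3) by (intro hit_prob_step_up cookie_env_reflect_env)
  then show ?thesis
    by (simp add: hit_prob_reflect[of a b y] hit_prob_reflect[of a b "y + 1"])
qed

lemma hit_prob_mono_start:
  assumes "b \<le> ereal (of_int y1)" and "y1 \<le> y2" and "ereal (of_int y2) \<le> a" and "cookie_env \<omega>"
  shows "hit_prob a b y1 \<omega> n \<le> hit_prob a b y2 \<omega> n"
  using assms(2,3)
proof (induction y2 rule: int_ge_induct)
  case (step y)
  have "hit_prob a b y1 \<omega> n \<le> hit_prob a b y \<omega> n"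
    using step by (intro step.IH) (auto intro: order_trans[rotated])
  also have "\<dots> \<le> hit_prob a b (y + 1) \<omega> n"
    using assms(1,4) step by (intro hit_prob_step_up) (auto intro: order_trans)
  finally show ?case .
qed simp

lemma hit_prob_antimono_start:
  assumes "a \<le> ereal (of_int y1)" and "y1 \<le> y2" and "ereal (of_int y2) \<le> b" and "cookie_env \<omega>"
  shows "hit_prob a b y2 \<omega> n \<le> hit_prob a b y1 \<omega> n"
  using assms(2,3)
proof (induction y2 rule: int_ge_induct)
  case (step y)
  have "hit_prob a b (y + 1) \<omega> n \<le> hit_prob a b y \<omega> n"
    using assms(1,4) step by (intro hit_prob_step_down) (auto intro: order_trans)
  also have "\<dots> \<le> hit_prob a b y1 \<omega> n"
    using step by (intro step.IH) (auto intro: order_trans[rotated])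
  finally show ?case .
qed simp

section \<open>The cookie walk as a random process\<close>

lemma (in sequence_space) measurable_tail [measurable]: "(\<lambda>u k. u (Suc k)) \<in> S \<rightarrow>\<^sub>M S"
  by (rule measurable_PiM_single') (auto simp: space_PiM)

lemma (in sequence_space) measure_head_tail:
  assumes [measurable]: "C \<in> sets M" "A \<in> sets S"
  shows "measure S {u \<in> space S. u 0 \<in> C \<and> (\<lambda>k. u (Suc k)) \<in> A} = measure M C * measure S A"
proof -
  let ?f = "\<lambda>(s, u). case_nat s u"
  let ?E = "{u \<in> space S. u 0 \<in> C \<and> (\<lambda>k. u (Suc k)) \<in> A}"
  have "measure S ?E = measure (distr (M \<Otimes>\<^sub>M S) S ?f) ?E"
    by (simp add: PiM_iter)
  also have "\<dots> = measure (M \<Otimes>\<^sub>M S) (?f -` ?E \<inter> space (M \<Otimes>\<^sub>M S))"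
    by (rule measure_distr) simp_all
  also have "?f -` ?E \<inter> space (M \<Otimes>\<^sub>M S) = C \<times> A"
    using sets.sets_into_space[OF assms(1)] sets.sets_into_space[OF assms(2)]
    by (auto simp: space_pair_measure space_PiM subset_eq PiE_iff split: nat.splits)
  also have "measure (M \<Otimes>\<^sub>M S) (C \<times> A) = measure M C * measure S A"
    using P.emeasure_pair_measure_Times[OF assms] by (simp add: measure_def enn2real_mult)
  finally show ?thesis .
qed

abbreviation uniform01 :: "real measure" where
  "uniform01 \<equiv> uniform_measure lborel {0..1}"

interpretation uniform01: prob_space uniform01
  by (rule prob_space_uniform_measure) auto

interpretation cookie_seq: sequence_space uniform01 ..

lemma cookie_space_eq: "cookie_space = cookie_seq.S"
  by (simp add: cookie_space_def)

interpretation cookie_space: prob_space cookie_space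
  unfolding cookie_space_eq by unfold_locales

lemma space_cookie_space [simp]: "space cookie_space = UNIV"
  by (simp add: cookie_space_eq space_PiM)

lemma measure_uniform01_lessThan:
  assumes "0 \<le> c" and "c \<le> 1"
  shows "measure uniform01 {..<c} = c"
proof -
  have "{0..1} \<inter> {..<c} = {0..<c}"
    using assms by auto
  then show ?thesis
    using assms by simp
qed

lemma measure_uniform01_atLeast:
  assumes "0 \<le> c" and "c \<le> 1"
  shows "measure uniform01 {c..} = 1 - c"
proof -
  have "{0..1} \<inter> {c..} = {c..1}"
    using assms by auto
  then show ?thesis
    using assms by simp
qed

lemma cookie_space_first_step:
  assumes "A \<in> sets cookie_space" "B \<in> sets cookie_space" and "0 \<le> c" "c \<le> 1"
  shows "measure cookie_space
      {u. if u 0 < c then (\<lambda>k. u (Suc k)) \<in> A else (\<lambda>k. u (Suc k)) \<in> B}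
    = c * measure cookie_space A + (1 - c) * measure cookie_space B"
proof -
  have [measurable]: "A \<in> sets cookie_seq.S" "B \<in> sets cookie_seq.S"
    using assms(1,2) by (simp_all add: cookie_space_eq)
  have head: "{..<c} \<in> sets uniform01" "{c..} \<in> sets uniform01"
    by simp_all
  let ?E = "\<lambda>C D. {u \<in> space cookie_seq.S. u 0 \<in> C \<and> (\<lambda>k. u (Suc k)) \<in> D}"
  have "measure cookie_seq.S {u. if u 0 < c then (\<lambda>k. u (Suc k)) \<in> A else (\<lambda>k. u (Suc k)) \<in> B}
      = measure cookie_seq.S (?E {..<c} A \<union> ?E {c..} B)"
    by (rule arg_cong) (auto simp: space_PiM)
  also have "\<dots> = measure cookie_seq.S (?E {..<c} A) + measure cookie_seq.S (?E {c..} B)"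
    by (rule cookie_seq.finite_measure_Union) auto
  also have "\<dots> = c * measure cookie_seq.S A + (1 - c) * measure cookie_seq.S B"
    unfolding cookie_seq.measure_head_tail[OF head(1) \<open>A \<in> sets cookie_seq.S\<close>]
      cookie_seq.measure_head_tail[OF head(2) \<open>B \<in> sets cookie_seq.S\<close>]
      measure_uniform01_lessThan[OF assms(3,4)] measure_uniform01_atLeast[OF assms(3,4)] ..
  finally show ?thesis
    unfolding cookie_space_eq .
qed

lemma cookie_hist_ne_Nil: "cookie_hist y \<omega> u n \<noteq> []"
  by (cases n) (auto simp: Let_def)

lemma cookie_hist_Suc_first:
  "cookie_hist y \<omega> u (Suc n)
    = y # cookie_hist (if u 0 < \<omega> y 1 then y + 1 else y - 1) (consume_cookie y \<omega>) (\<lambda>k. u (Suc k)) n"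
proof (induction n)
  case (Suc n)
  define ys where "ys = cookie_hist (if u 0 < \<omega> y 1 then y + 1 else y - 1) (consume_cookie y \<omega>) (\<lambda>k. u (Suc k)) n"
  have last: "last (y # ys) = last ys"
    using cookie_hist_ne_Nil by (simp add: ys_def)
  have count: "\<omega> (last ys) (count_list (y # ys) (last ys)) = consume_cookie y \<omega> (last ys) (count_list ys (last ys))"
    by (simp add: consume_cookie_def)
  have "cookie_hist (if u 0 < \<omega> y 1 then y + 1 else y - 1) (consume_cookie y \<omega>) (\<lambda>k. u (Suc k)) (Suc n)
      = ys @ [if u (Suc n) < consume_cookie y \<omega> (last ys) (count_list ys (last ys)) then last ys + 1 else last ys - 1]"
    by (simp only: cookie_hist.simps(2) Let_def flip: ys_def)
  then show ?case
    unfolding cookie_hist.simps(2)[of y \<omega> u "Suc n"] Let_def Suc.IH[folded ys_def] last count by simp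
qed simp

lemma cookie_walk_0 [simp]: "cookie_walk y \<omega> u 0 = y"
  by (simp add: cookie_walk_def)

lemma cookie_walk_Suc:
  "cookie_walk y \<omega> u (Suc n)
    = cookie_walk (if u 0 < \<omega> y 1 then y + 1 else y - 1) (consume_cookie y \<omega>) (\<lambda>k. u (Suc k)) n"
  unfolding cookie_walk_def cookie_hist_Suc_first by (simp add: cookie_hist_ne_Nil)

lemma measurable_cookie_walk [measurable]:
  "(\<lambda>u. cookie_walk y \<omega> u n) \<in> cookie_space \<rightarrow>\<^sub>M count_space UNIV"
proof (induction n arbitrary: y \<omega>)
  case (Suc n)
  have [measurable]: "(\<lambda>u. cookie_walk y' \<omega>' u n) \<in> cookie_seq.S \<rightarrow>\<^sub>M count_space UNIV" for y' \<omega>'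
    using Suc.IH by (simp add: cookie_space_eq)
  show ?case
    unfolding cookie_walk_Suc cookie_space_eq by measurable
qed (simp add: cookie_walk_def)

lemma measure_cookie_space_UNIV [simp]: "measure cookie_space UNIV = 1"
  using cookie_space.prob_space by simp

lemma cookie_prob_not:
  assumes "{u \<in> space cookie_space. P (cookie_walk y \<omega> u)} \<in> sets cookie_space"
  shows "cookie_prob y \<omega> (\<lambda>X. \<not> P X) = 1 - cookie_prob y \<omega> P"
  using cookie_space.prob_compl[OF assms] by (simp add: cookie_prob_def set_diff_eq)

lemma cookie_prob_first_step:
  assumes "0 \<le> \<omega> y 1" and "\<omega> y 1 \<le> 1"
    and "\<And>y'. {u \<in> space cookie_space. P (cookie_walk y' (consume_cookie y \<omega>) u)} \<in> sets cookie_space"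
  shows "cookie_prob y \<omega> (\<lambda>X. P (\<lambda>k. X (Suc k)))
    = \<omega> y 1 * cookie_prob (y + 1) (consume_cookie y \<omega>) P
      + (1 - \<omega> y 1) * cookie_prob (y - 1) (consume_cookie y \<omega>) P"
proof -
  let ?A = "\<lambda>y'. {u \<in> space cookie_space. P (cookie_walk y' (consume_cookie y \<omega>) u)}"
  have "{u \<in> space cookie_space. P (\<lambda>k. cookie_walk y \<omega> u (Suc k))}
      = {u. if u 0 < \<omega> y 1 then (\<lambda>k. u (Suc k)) \<in> ?A (y + 1) else (\<lambda>k. u (Suc k)) \<in> ?A (y - 1)}"
    by (simp add: cookie_walk_Suc)
  then show ?thesis
    using cookie_space_first_step[OF assms(3,3,1,2)] by (simp add: cookie_prob_def)
qed

definition hits_within :: "ereal \<Rightarrow> ereal \<Rightarrow> nat \<Rightarrow> (nat \<Rightarrow> int) \<Rightarrow> bool" where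
  "hits_within a b n X \<longleftrightarrow> (\<exists>k\<le>n. ereal (of_int (X k)) = a \<and> (\<forall>j<k. ereal (of_int (X j)) \<noteq> b))"

lemma hits_within_0: "hits_within a b 0 X \<longleftrightarrow> ereal (of_int (X 0)) = a"
  by (simp add: hits_within_def)

lemma hits_within_Suc:
  "hits_within a b (Suc n) X \<longleftrightarrow>
    ereal (of_int (X 0)) = a \<or> ereal (of_int (X 0)) \<noteq> b \<and> hits_within a b n (\<lambda>k. X (Suc k))"
  unfolding hits_within_def less_Suc_eq_le[symmetric] Ex_less_Suc2 All_less_Suc2 by auto

lemma hits_within_mono: "m \<le> n \<Longrightarrow> hits_within a b m X \<Longrightarrow> hits_within a b n X"
  by (auto simp: hits_within_def intro: order_trans)

lemma hits_within_sets [measurable]: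
  "{u \<in> space cookie_space. hits_within a b n (cookie_walk y \<omega> u)} \<in> sets cookie_space"
  unfolding hits_within_def by measurable

lemma cookie_prob_hits_within:
  assumes "cookie_env \<omega>"
  shows "cookie_prob y \<omega> (hits_within a b n) = hit_prob a b y \<omega> n"
  using assms
proof (induction n arbitrary: y \<omega>)
  case 0
  then show ?case
    by (simp add: cookie_prob_def hits_within_0 hit_prob_0)
next
  case (Suc n)
  show ?case
  proof (cases "ereal (of_int y) = a \<or> ereal (of_int y) = b")
    case True
    then show ?thesis
      by (auto simp: cookie_prob_def hits_within_Suc hit_prob_Suc)
  next
    case False
    then have "cookie_prob y \<omega> (hits_within a b (Suc n))
        = cookie_prob y \<omega> (\<lambda>X. hits_within a b n (\<lambda>k. X (Suc k)))"
      by (simp add: cookie_prob_def hits_within_Suc)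
    also have "\<dots> = \<omega> y 1 * cookie_prob (y + 1) (consume_cookie y \<omega>) (hits_within a b n)
        + (1 - \<omega> y 1) * cookie_prob (y - 1) (consume_cookie y \<omega>) (hits_within a b n)"
      using cookie_env_first_cookie[OF Suc.prems] by (intro cookie_prob_first_step hits_within_sets) auto
    also have "\<dots> = hit_prob a b y \<omega> (Suc n)"
      using False Suc.prems by (simp add: Suc.IH cookie_env_consume_cookie hit_prob_Suc)
    finally show ?thesis .
  qed
qed

lemma cookie_prob_hits_eventually:
  assumes "cookie_env \<omega>"
  shows "(\<lambda>n. hit_prob a b y \<omega> n) \<longlonglongrightarrow> cookie_prob y \<omega> (\<lambda>X. \<exists>n. hits_within a b n X)"
proof -
  let ?A = "\<lambda>n. {u \<in> space cookie_space. hits_within a b n (cookie_walk y \<omega> u)}"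
  have "(\<lambda>n. measure cookie_space (?A n)) \<longlonglongrightarrow> measure cookie_space (\<Union>n. ?A n)"
    using hits_within_sets
    by (intro cookie_space.finite_Lim_measure_incseq) (auto simp: incseq_def intro: hits_within_mono)
  moreover have "(\<Union>n. ?A n) = {u \<in> space cookie_space. \<exists>n. hits_within a b n (cookie_walk y \<omega> u)}"
    by auto
  ultimately show ?thesis
    using cookie_prob_hits_within[OF assms] by (simp add: cookie_prob_def)
qed

section \<open>Hitting times\<close>

lemma hitE:
  obtains (never) "hit X a = \<infinity>" and "\<And>k. ereal (of_int (X k)) \<noteq> a"
  | (first) k where "hit X a = ereal (real k)" and "ereal (of_int (X k)) = a"
    and "\<And>j. j < k \<Longrightarrow> ereal (of_int (X j)) \<noteq> a"
proof (cases "\<exists>k. ereal (of_int (X k)) = a")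
  case True
  define k where "k = (LEAST k. ereal (of_int (X k)) = a)"
  have "hit X a = ereal (real k)"
    using True by (simp add: hit_def k_def)
  moreover have "ereal (of_int (X k)) = a"
    using True unfolding k_def by (rule LeastI_ex)
  moreover have "ereal (of_int (X j)) \<noteq> a" if "j < k" for j
    using not_less_Least that unfolding k_def by blast
  ultimately show ?thesis
    by (rule first)
qed (auto simp: hit_def intro: never)

lemma le_hit_iff: "ereal (real k) \<le> hit X a \<longleftrightarrow> (\<forall>j<k. ereal (of_int (X j)) \<noteq> a)"
  by (cases X a rule: hitE) (auto simp: not_le[symmetric])

lemma hit_le_min_iff_hits_within:
  "hit X a \<le> min (hit X b) (ereal (real n)) \<longleftrightarrow> hits_within a b n X"
proof (cases X a rule: hitE)
  case never
  then show ?thesis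
    by (simp add: hits_within_def)
next
  case (first k)
  have "hits_within a b n X \<longleftrightarrow> k \<le> n \<and> (\<forall>j<k. ereal (of_int (X j)) \<noteq> b)"
  proof
    assume "hits_within a b n X"
    then obtain k' where "k' \<le> n" and "ereal (of_int (X k')) = a"
      and "\<forall>j<k'. ereal (of_int (X j)) \<noteq> b"
      by (auto simp: hits_within_def)
    moreover have "k \<le> k'"
      using first(3)[of k'] \<open>ereal (of_int (X k')) = a\<close> not_le by blast
    ultimately show "k \<le> n \<and> (\<forall>j<k. ereal (of_int (X j)) \<noteq> b)"
      by auto
  qed (auto simp: hits_within_def first)
  then show ?thesis
    using first by (auto simp: le_hit_iff)
qed

lemma hit_less_hit_iff:
  assumes "a \<noteq> b"
  shows "hit X a < hit X b \<longleftrightarrow> (\<exists>n. hits_within a b n X)"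
proof (cases X a rule: hitE)
  case never
  then show ?thesis
    by (simp add: hits_within_def)
next
  case (first k)
  have "hit X b \<noteq> ereal (real k)"
    using first(2) assms by (cases X b rule: hitE) auto
  then have "hit X a < hit X b \<longleftrightarrow> (\<exists>n. hit X a \<le> min (hit X b) (ereal (real n)))"
    using first(1) by (auto simp: order.strict_iff_order)
  then show ?thesis
    by (simp only: hit_le_min_iff_hits_within)
qed

lemma hit_le_ereal_iff_floor:
  assumes "0 \<le> r"
  shows "hit X a \<le> ereal r \<longleftrightarrow> hit X a \<le> ereal (real (nat \<lfloor>r\<rfloor>))"
proof (cases X a rule: hitE)
  case (first k)
  have "real k \<le> r \<longleftrightarrow> real k \<le> real (nat \<lfloor>r\<rfloor>)"
    using assms by (metis le_nat_floor of_nat_floor of_nat_mono order.trans)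
  then show ?thesis
    using first(1) by simp
qed simp

lemma cookie_prob_hit_within_time_mono:
  assumes "cookie_env \<omega>" and "x \<le> ereal (of_int y1)" and "y1 \<le> y2" and "ereal (of_int y2) \<le> z"
    and "0 \<le> r"
  shows "cookie_prob y1 \<omega> (\<lambda>X. hit X z \<le> min (hit X x) (ereal r))
    \<le> cookie_prob y2 \<omega> (\<lambda>X. hit X z \<le> min (hit X x) (ereal r))"
proof -
  have "(\<lambda>X. hit X z \<le> min (hit X x) (ereal r)) = hits_within z x (nat \<lfloor>r\<rfloor>)"
    using hit_le_ereal_iff_floor[OF assms(5)] by (simp add: fun_eq_iff flip: hit_le_min_iff_hits_within)
  then show ?thesis
    using assms by (simp add: cookie_prob_hits_within hit_prob_mono_start)
qed

lemma cookie_prob_hit_before_mono: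
  assumes "cookie_env \<omega>" and "x \<le> ereal (of_int y1)" and "y1 < y2" and "ereal (of_int y2) \<le> z"
  shows "cookie_prob y1 \<omega> (\<lambda>X. hit X z \<le> hit X x) \<le> cookie_prob y2 \<omega> (\<lambda>X. hit X z \<le> hit X x)"
proof -
  have "ereal (of_int y1) < ereal (of_int y2)"
    using assms(3) by simp
  then have "x \<noteq> z"
    using assms(2,4) by (meson le_less_trans less_le_trans order.irrefl)
  then have event: "(\<lambda>X. hit X z \<le> hit X x) = (\<lambda>X. \<not> (\<exists>n. hits_within x z n X))"
    by (auto simp: fun_eq_iff not_less[symmetric] hit_less_hit_iff)
  have "hit_prob x z y2 \<omega> n \<le> hit_prob x z y1 \<omega> n" for n
    using assms by (intro hit_prob_antimono_start) auto
  then have le: "cookie_prob y2 \<omega> (\<lambda>X. \<exists>n. hits_within x z n X)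
      \<le> cookie_prob y1 \<omega> (\<lambda>X. \<exists>n. hits_within x z n X)"
    using assms(1) by (intro LIMSEQ_le[OF cookie_prob_hits_eventually cookie_prob_hits_eventually]) auto
  have sets: "{u \<in> space cookie_space. \<exists>n. hits_within x z n (cookie_walk y \<omega> u)} \<in> sets cookie_space" for y
    by measurable
  show ?thesis
    unfolding event cookie_prob_not[OF sets] using le by simp
qed

theorem mainTheorem14:
  fixes \<omega> :: "int \<Rightarrow> nat \<Rightarrow> real" and x z t :: ereal and y1 y2 :: int
  assumes "\<omega> \<in> Omega_plus"
    and "x = -\<infinity> \<or> (\<exists>k::int. x = ereal (of_int k))"
    and "z = \<infinity> \<or> (\<exists>k::int. z = ereal (of_int k))"
    and "x \<le> ereal (of_int y1)" and "y1 \<le> y2" and "ereal (of_int y2) \<le> z"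
    and "0 \<le> t"
  shows "cookie_prob y1 \<omega> (\<lambda>X. hit X z \<le> min (hit X x) t)
           \<le> cookie_prob y2 \<omega> (\<lambda>X. hit X z \<le> min (hit X x) t)"
proof -
  have env: "cookie_env \<omega>"
    using assms(1) by (rule Omega_plus_imp_cookie_env)
  show ?thesis
  proof (cases t)
    case (real r)
    then show ?thesis
      using cookie_prob_hit_within_time_mono[OF env assms(4-6)] assms(7) by simp
  next
    case PInf
    show ?thesis
    proof (cases "y1 = y2")
      case False
      then show ?thesis
        using PInf cookie_prob_hit_before_mono[OF env assms(4) _ assms(6)] assms(5) by simp
    qed simp
  qed (use assms(7) in simp)
qed

end
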